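(* Let $K$ be a field and assume: (1) $A$ is a (left and right) noetherian $K$-algebra without zero divisors; (2) $w\in A$ is a nonzero normal element, i.e. $wA=Aw$, and $\sigma$ is the automorphism of $A$ with $wy=\sigma(y)w$ for all $y\in A$; (3) $J$ is a maximal left ideal of $A$ such that $w-\mu\in J$ for some nonzero $\mu\in K$. Let $x\in A$ be a nonzero non-unit, set $I=Jx$, $L=Ax/I$, $M=A/I$, $N=A/Ax$, so that there is a short exact sequence $0\to L\to M\to N\to 0$ of left $A$-modules. Assume further: (4) for every integer $m\ge 0$ there is no $a\in A$ with $\sigma^m(x)a-1\in J$; (5) $N\supsetneq wN\supsetneq w^2N\supsetneq\cdots\supsetneq w^mN\supsetneq\cdots$ is a strictly descending chain of submodules of $N$; (6) every nonzero submodule of $N$ contains $w^mN$ for some $m\ge 0$. Then $M$ is an essential extension of $L$, i.e. every nonzero submodule of $M$ intersects $L$ nontrivially (equivalently, every left ideal of $A$ strictly containing $I$ contains $Ax$).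
   Context: An element $w$ of a ring $A$ is normal if $wA=Aw$. For a normal element $w$ and a left $A$-module $N$, $w^mN$ is a submodule of $N$. *)

theory Defs
  imports Main
begin

definition left_ideal :: "'a::ring_1 set \<Rightarrow> bool" where
  "left_ideal T \<longleftrightarrow> 0 \<in> T \<and> (\<forall>a\<in>T. \<forall>b\<in>T. a + b \<in> T) \<and> (\<forall>r. \<forall>a\<in>T. r * a \<in> T)"

definition right_ideal :: "'a::ring_1 set \<Rightarrow> bool" where
  "right_ideal T \<longleftrightarrow> 0 \<in> T \<and> (\<forall>a\<in>T. \<forall>b\<in>T. a + b \<in> T) \<and> (\<forall>r. \<forall>a\<in>T. a * r \<in> T)"

definition left_noetherian :: "'a::ring_1 itself \<Rightarrow> bool" where
  "left_noetherian _ \<longleftrightarrow> (\<forall>C :: nat \<Rightarrow> 'a set. (\<forall>n. left_ideal (C n)) \<and> (\<forall>n. C n \<subseteq> C (Suc n))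
      \<longrightarrow> (\<exists>n0. \<forall>n\<ge>n0. C n = C n0))"

definition right_noetherian :: "'a::ring_1 itself \<Rightarrow> bool" where
  "right_noetherian _ \<longleftrightarrow> (\<forall>C :: nat \<Rightarrow> 'a set. (\<forall>n. right_ideal (C n)) \<and> (\<forall>n. C n \<subseteq> C (Suc n))
      \<longrightarrow> (\<exists>n0. \<forall>n\<ge>n0. C n = C n0))"

definition maximal_left_ideal :: "'a::ring_1 set \<Rightarrow> bool" where
  "maximal_left_ideal J \<longleftrightarrow> left_ideal J \<and> J \<noteq> UNIV \<and>
     (\<forall>T. left_ideal T \<and> J \<subseteq> T \<longrightarrow> T = J \<or> T = UNIV)"

text \<open>A K-algebra structure: a unital ring homomorphism from the field K into the centre.\<close>
definition algebra_map :: "('k::field \<Rightarrow> 'a::ring_1) \<Rightarrow> bool" where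
  "algebra_map \<phi> \<longleftrightarrow> \<phi> 1 = 1 \<and> (\<forall>c d. \<phi> (c + d) = \<phi> c + \<phi> d) \<and> (\<forall>c d. \<phi> (c * d) = \<phi> c * \<phi> d)
     \<and> (\<forall>c a. \<phi> c * a = a * \<phi> c)"

definition ring_automorphism :: "('a::ring_1 \<Rightarrow> 'a) \<Rightarrow> bool" where
  "ring_automorphism \<sigma> \<longleftrightarrow> bij \<sigma> \<and> \<sigma> 1 = 1 \<and> (\<forall>a b. \<sigma> (a + b) = \<sigma> a + \<sigma> b)
     \<and> (\<forall>a b. \<sigma> (a * b) = \<sigma> a * \<sigma> b)"

text \<open>The left ideal \<open>I\<close> with \<open>w\<^sup>m (A/I) = (w\<^sup>m A + I)/I\<close>, i.e. the preimage in A of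
  the submodule \<open>w\<^sup>m N\<close> of \<open>N = A/Ax\<close>.\<close>
definition wpow_N :: "'a::ring_1 \<Rightarrow> 'a \<Rightarrow> nat \<Rightarrow> 'a set" where
  "wpow_N w x m = {w ^ m * a + c * x | a c. True}"

end

theory Submission
  imports Defs
begin

(*
  Suppose a left ideal T strictly contains Jx but meets Ax
  only inside Jx.  Then T + Ax strictly contains Ax, so by hypothesis (6) it contains
  w^m A + Ax, in particular w^m = t + c x with t in T.  Put s = sigma^m(x), so that
  w^m x = s w^m.  Then s t = (w^m - s c) x lies in T and in Ax, hence in Jx, and
  cancelling x (no zero divisors) gives w^m - s c in J.  Since w = mu modulo J and
  mu is a central unit, w^m = mu^m modulo J, so s (c mu^-m) - 1 lies in J,
  contradicting hypothesis (4).
*)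

lemma left_ideal_zero: "left_ideal T \<Longrightarrow> 0 \<in> T"
  by (simp add: left_ideal_def)

lemma left_ideal_add: "left_ideal T \<Longrightarrow> a \<in> T \<Longrightarrow> b \<in> T \<Longrightarrow> a + b \<in> T"
  by (simp add: left_ideal_def)

lemma left_ideal_mult: "left_ideal T \<Longrightarrow> a \<in> T \<Longrightarrow> r * a \<in> T"
  by (simp add: left_ideal_def)

lemma left_ideal_diff:
  assumes "left_ideal T" "a \<in> T" "b \<in> T"
  shows "a - b \<in> T"
proof -
  have "- b \<in> T" using left_ideal_mult[OF assms(1,3), of "- 1"] by simp
  from left_ideal_add[OF assms(1,2) this] show ?thesis by simp
qed

definition plus_principal :: "'a::ring_1 set \<Rightarrow> 'a \<Rightarrow> 'a set" where
  "plus_principal T x = {t + c * x | t c. t \<in> T}"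

lemma left_ideal_plus_principal:
  assumes T: "left_ideal T"
  shows "left_ideal (plus_principal T x)"
  unfolding left_ideal_def plus_principal_def
proof (intro conjI ballI allI)
  have "(0::'a) = 0 + 0 * x" by simp
  then show "0 \<in> {t + c * x |t c. t \<in> T}" using left_ideal_zero[OF T] by blast
next
  fix a b assume "a \<in> {t + c * x |t c. t \<in> T}" "b \<in> {t + c * x |t c. t \<in> T}"
  then obtain t1 c1 t2 c2 where ab: "a = t1 + c1 * x" "b = t2 + c2 * x" "t1 \<in> T" "t2 \<in> T"
    by blast
  then have "a + b = (t1 + t2) + (c1 + c2) * x" "t1 + t2 \<in> T"
    using left_ideal_add[OF T] by (simp_all add: algebra_simps)
  then show "a + b \<in> {t + c * x |t c. t \<in> T}" by blast
next
  fix r a assume "a \<in> {t + c * x |t c. t \<in> T}"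
  then obtain t1 c1 where "a = t1 + c1 * x" "t1 \<in> T" by blast
  then have "r * a = r * t1 + (r * c1) * x" "r * t1 \<in> T"
    using left_ideal_mult[OF T] by (simp_all add: algebra_simps)
  then show "r * a \<in> {t + c * x |t c. t \<in> T}" by blast
qed

lemma plus_principal_strict:
  assumes T: "left_ideal T"
    and strict: "{j * x | j. j \<in> J} \<subset> T"
    and meet: "T \<inter> {c * x | c. True} \<subseteq> {j * x | j. j \<in> J}"
  shows "{c * x | c. True} \<subset> plus_principal T x"
proof -
  obtain t0 where t0: "t0 \<in> T" "t0 \<notin> {c * x | c. True}"
    using strict meet by blast
  have "t0 = t0 + 0 * x" "c * x = 0 + c * x" for c by simp_all
  then have "t0 \<in> plus_principal T x" "{c * x | c. True} \<subseteq> plus_principal T x"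
    using t0 left_ideal_zero[OF T] unfolding plus_principal_def by blast+
  then show ?thesis using t0 by blast
qed

lemma normal_power_commute:
  fixes w :: "'a::ring_1"
  assumes sigma_w: "\<forall>y. w * y = \<sigma> y * w"
  shows "w ^ m * y = (\<sigma> ^^ m) y * w ^ m"
proof (induction m arbitrary: y)
  case 0 then show ?case by simp
next
  case (Suc m)
  have "w ^ Suc m * y = w * ((\<sigma> ^^ m) y * w ^ m)" using Suc by (simp add: mult.assoc)
  also have "\<dots> = (w * (\<sigma> ^^ m) y) * w ^ m" by (simp add: mult.assoc)
  also have "\<dots> = \<sigma> ((\<sigma> ^^ m) y) * w * w ^ m" by (simp only: sigma_w[rule_format])
  finally show ?case by (simp add: mult.assoc)
qed

lemma algebra_map_power:
  assumes "algebra_map \<phi>"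
  shows "\<phi> (c ^ m) = \<phi> c ^ m"
proof (induction m)
  case 0 then show ?case using assms unfolding algebra_map_def by simp
next
  case (Suc m)
  have "\<phi> (c * c ^ m) = \<phi> c * \<phi> (c ^ m)" using assms unfolding algebra_map_def by blast
  then show ?case using Suc by simp
qed

lemma algebra_map_inverse:
  assumes "algebra_map \<phi>" "c \<noteq> 0"
  shows "\<phi> (inverse c) * \<phi> c = 1"
proof -
  have mult: "\<phi> (a * b) = \<phi> a * \<phi> b" and one: "\<phi> 1 = 1" for a b
    using assms(1) unfolding algebra_map_def by blast+
  have "\<phi> (inverse c) * \<phi> c = \<phi> (inverse c * c)" by (simp only: mult)
  then show ?thesis using assms(2) one by simp
qed

lemma power_congruent_central:
  fixes w p :: "'a::ring_1"
  assumes J: "left_ideal J" and central: "\<forall>a. p * a = a * p" and wp: "w - p \<in> J"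
  shows "w ^ m - p ^ m \<in> J"
proof (induction m)
  case 0 then show ?case using left_ideal_zero[OF J] by simp
next
  case (Suc m)
  have "p * w ^ m = w ^ m * p" using central by blast
  then have "w ^ Suc m - p ^ Suc m = w ^ m * (w - p) + p * (w ^ m - p ^ m)"
    by (simp add: algebra_simps power_commutes)
  moreover have "w ^ m * (w - p) \<in> J" "p * (w ^ m - p ^ m) \<in> J"
    using J wp Suc by (simp_all add: left_ideal_mult)
  ultimately show ?case using J by (simp add: left_ideal_add)
qed

lemma central_unit_congruent:
  fixes u v :: "'a::ring_1"
  assumes J: "left_ideal J" and inv: "v * u = 1" and central: "\<forall>a. v * a = a * v"
    and cong: "u - s * b \<in> J"
  shows "s * (b * v) - 1 \<in> J"
proof -
  have "(- v) * (u - s * b) = v * (s * b) - v * u" by (simp add: algebra_simps)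
  also have "\<dots> = s * (b * v) - 1"
    using inv central[rule_format, of "s * b"] by (simp add: mult.assoc)
  finally show ?thesis using left_ideal_mult[OF J cong, of "- v"] by simp
qed

text \<open>If \<open>T\<close> meets \<open>Ax\<close> only inside \<open>Jx\<close> and \<open>w\<^sup>m = t + c x\<close> with \<open>t \<in> T\<close>,
  then \<open>w\<^sup>m \<equiv> \<sigma>\<^sup>m(x) c\<close> modulo \<open>J\<close>: indeed \<open>\<sigma>\<^sup>m(x) t = (w\<^sup>m - \<sigma>\<^sup>m(x) c) x\<close>
  lies in \<open>T \<inter> Ax \<subseteq> Jx\<close>, and \<open>x\<close> can be cancelled.\<close>
lemma power_congruent_twisted:
  fixes x w :: "'a::ring_1_no_zero_divisors"
  assumes T: "left_ideal T"
    and meet: "T \<inter> {c * x | c. True} \<subseteq> {j * x | j. j \<in> J}"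
    and x_nz: "x \<noteq> 0"
    and sigma_w: "\<forall>y. w * y = \<sigma> y * w"
    and decomp: "w ^ m = t + c * x" and t: "t \<in> T"
  shows "w ^ m - (\<sigma> ^^ m) x * c \<in> J"
proof -
  define s where "s = (\<sigma> ^^ m) x"
  have "s * t = (w ^ m - s * c) * x"
    using decomp normal_power_commute[OF sigma_w, of m x]
    by (simp add: s_def algebra_simps)
  moreover have "s * t \<in> T" using left_ideal_mult[OF T t] .
  ultimately obtain j where "j \<in> J" "(w ^ m - s * c) * x = j * x"
    using meet by force
  then have "w ^ m - s * c = j" using x_nz by simp
  with \<open>j \<in> J\<close> show ?thesis by (simp add: s_def)
qed

theorem theorem2p2:
  fixes \<phi> :: "'k::field \<Rightarrow> 'a::ring_1_no_zero_divisors"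
    and w x \<mu> :: _ and \<sigma> :: "'a \<Rightarrow> 'a" and J :: "'a set"
  assumes alg: "algebra_map \<phi>"
    and noeth_l: "left_noetherian TYPE('a)"
    and noeth_r: "right_noetherian TYPE('a)"
    and w_nz: "w \<noteq> 0"
    and w_normal: "{w * a | a. True} = {a * w | a. True}"
    and sigma_aut: "ring_automorphism \<sigma>"
    and sigma_w: "\<forall>y. w * y = \<sigma> y * w"
    and J_max: "maximal_left_ideal J"
    and mu_nz: "(\<mu>::'k) \<noteq> 0"
    and w_mu: "w - \<phi> \<mu> \<in> J"
    and x_nz: "x \<noteq> 0"
    and x_nonunit: "\<not> (\<exists>y. x * y = 1 \<and> y * x = 1)"
    and cond4: "\<forall>m::nat. \<not> (\<exists>a. (\<sigma> ^^ m) x * a - 1 \<in> J)"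
    and cond5: "\<forall>m. wpow_N w x (Suc m) \<subset> wpow_N w x m"
    and cond6: "\<forall>T. left_ideal T \<and> {c * x | c. True} \<subset> T \<longrightarrow> (\<exists>m. wpow_N w x m \<subseteq> T)"
  shows "\<forall>T. left_ideal T \<and> {j * x | j. j \<in> J} \<subset> T \<longrightarrow>
           (\<exists>t \<in> T \<inter> {c * x | c. True}. t \<notin> {j * x | j. j \<in> J})"
proof (intro allI impI)
  fix T assume "left_ideal T \<and> {j * x | j. j \<in> J} \<subset> T"
  then have T: "left_ideal T" and strict: "{j * x | j. j \<in> J} \<subset> T" by auto
  have J: "left_ideal J" using J_max by (simp add: maximal_left_ideal_def)
  show "\<exists>t \<in> T \<inter> {c * x | c. True}. t \<notin> {j * x | j. j \<in> J}"
  proof (rule ccontr)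
    assume "\<not> ?thesis"
    then have meet: "T \<inter> {c * x | c. True} \<subseteq> {j * x | j. j \<in> J}" by blast
    obtain m where "wpow_N w x m \<subseteq> plus_principal T x"
      using cond6[rule_format, OF conjI[OF left_ideal_plus_principal[OF T]
            plus_principal_strict[OF T strict meet]]] by blast
    moreover have "w ^ m \<in> wpow_N w x m"
    proof -
      have "w ^ m = w ^ m * 1 + 0 * x" by simp
      then show ?thesis unfolding wpow_N_def by blast
    qed
    ultimately obtain t c where "w ^ m = t + c * x" "t \<in> T"
      unfolding plus_principal_def by blast
    then have twisted: "w ^ m - (\<sigma> ^^ m) x * c \<in> J"
      using power_congruent_twisted[OF T meet x_nz sigma_w] by blast
    have central: "\<forall>a. \<phi> c' * a = a * \<phi> c'" for c'
      using alg unfolding algebra_map_def by blast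
    have "w ^ m - \<phi> (\<mu> ^ m) \<in> J"
      using power_congruent_central[OF J central w_mu] algebra_map_power[OF alg] by simp
    then have "(w ^ m - (\<sigma> ^^ m) x * c) - (w ^ m - \<phi> (\<mu> ^ m)) \<in> J"
      using left_ideal_diff[OF J twisted] by blast
    then have "\<phi> (\<mu> ^ m) - (\<sigma> ^^ m) x * c \<in> J" by (simp add: algebra_simps)
    then have "(\<sigma> ^^ m) x * (c * \<phi> (inverse (\<mu> ^ m))) - 1 \<in> J"
      using central_unit_congruent[OF J algebra_map_inverse[OF alg] central] mu_nz by simp
    then show False using cond4 by blast
  qed
qed

end
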